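(* Let $\Gamma$ be an oriented hypergraph with $A\neq\mathbf 0$ and strong coloring number $\chi=\chi(\Gamma)$, and suppose $\chi=\dfrac{\lambda_N-\lambda_1}{1-\lambda_1}$. Let $g$ be any eigenfunction of $L$ with eigenvalue $\lambda_N$, and let $V_1,\dots,V_\chi$ be the color classes of any proper strong $\chi$-coloring. Then: (1) $\operatorname{supp}(g)\cap V_i\neq\varnothing$ for all $1\le i\le\chi$; (2) $S^g_{ij}<0$ for all $1\le i<j\le\chi$; (3) for all $1\le i<j\le\chi$, $\mathrm{RQ}(g_{ij})=\lambda_1=\dfrac{\chi-\lambda_N}{\chi-1}$, and $g_{ij}$ is an eigenfunction of $L$ with eigenvalue $\lambda_1$. Consequently the multiplicity $m_\Gamma(\lambda_1)$ of $\lambda_1=(\chi-\lambda_N)/(\chi-1)$ is at least $\chi-1$, and this inequality is strict if $m_\Gamma(\lambda_N)>1$.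
   Context: An oriented hypergraph $\Gamma=(V,E,\varphi)$ consists of a finite vertex set $V$ with $|V|=N$, an edge set $E\subseteq\mathcal P(V)$, and a function $\varphi\colon V\times E\to\{-1,0,1\}$ with $\varphi(v,e)\neq 0$ iff $v\in e$. Two vertices $v,w\in e$ are co-oriented in $e$ if $\varphi(v,e)=\varphi(w,e)$ and anti-oriented in $e$ if $\varphi(v,e)=-\varphi(w,e)$. The degree is $\deg v=|\{e\in E: v\in e\}|$; we assume every vertex has degree at least $1$, and $D=\mathrm{diag}(\deg v)_{v\in V}$. The adjacency matrix $A$ is the $N\times N$ matrix with $A_{v,v}=0$ and, for $v\neq w$, $A_{v,w}=(\#\text{edges in which } v,w \text{ are anti-oriented})-(\#\text{edges in which } v,w \text{ are co-oriented})$. The normalized Laplacian is $L=\mathrm{Id}-D^{-1}A$; it is self-adjoint for $\langle f,g\rangle=\sum_{v}\deg v\, f(v)g(v)$ on functions $V\to\mathbb R$, with (real) eigenvalues $\lambda_1\le\dots\le\lambda_N$; $m_\Gamma(\lambda)$ denotes the multiplicity of $\lambda$. The Rayleigh quotient of $f\neq0$ is $\mathrm{RQ}(f)=\langle Lf,f\rangle/\langle f,f\rangle$. A proper strong $k$-coloring is a map $V\to\{1,\dots,k\}$ such that any two distinct vertices in a common edge receive different colors; $\chi(\Gamma)$ is the least such $k$. For a function $g\colon V\to\mathbb R$ and color classes $V_1,\dots,V_\chi$, define $S^g_{ij}=\sum_{v\in V_i,\,w\in V_j}A_{v,w}g(v)g(w)$, and define $g_{ij}\colon V\to\mathbb R$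 by $g_{ij}(v)=g(v)$ if $v\in V_i$, $g_{ij}(v)=-g(v)$ if $v\in V_j$, and $g_{ij}(v)=0$ otherwise. *)

theory Defs
  imports "HOL-Analysis.Analysis"
begin

text \<open>Oriented hypergraph on the finite vertex type 'n (V = UNIV, N = CARD('n)).
  E is the edge set, phi the incidence function. Functions V -> real are vectors real^'n.\<close>

definition deg :: "'n set set \<Rightarrow> 'n \<Rightarrow> nat" where
  "deg E v = card {e \<in> E. v \<in> e}"

definition oriented_hypergraph :: "('n::finite) set set \<Rightarrow> ('n \<Rightarrow> 'n set \<Rightarrow> int) \<Rightarrow> bool" where
  "oriented_hypergraph E phi \<longleftrightarrow>
     (\<forall>e\<in>E. \<forall>v. phi v e \<in> {-1, 0, 1} \<and> (phi v e \<noteq> 0 \<longleftrightarrow> v \<in> e)) \<and>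
     (\<forall>v. deg E v \<ge> 1)"

definition adj :: "'n set set \<Rightarrow> ('n \<Rightarrow> 'n set \<Rightarrow> int) \<Rightarrow> 'n \<Rightarrow> 'n \<Rightarrow> real" where
  "adj E phi v w =
     (if v = w then 0
      else real (card {e \<in> E. v \<in> e \<and> w \<in> e \<and> phi v e = - phi w e})
         - real (card {e \<in> E. v \<in> e \<and> w \<in> e \<and> phi v e = phi w e}))"

definition lap :: "('n::finite) set set \<Rightarrow> ('n \<Rightarrow> 'n set \<Rightarrow> int) \<Rightarrow> real^'n \<Rightarrow> real^'n" where
  "lap E phi f = (\<chi> v. f $ v - (\<Sum>w\<in>UNIV. adj E phi v w * f $ w) / real (deg E v))"

definition wip :: "('n::finite) set set \<Rightarrow> real^'n \<Rightarrow> real^'n \<Rightarrow> real" where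
  "wip E f g = (\<Sum>v\<in>UNIV. real (deg E v) * f $ v * g $ v)"

definition RQ :: "('n::finite) set set \<Rightarrow> ('n \<Rightarrow> 'n set \<Rightarrow> int) \<Rightarrow> real^'n \<Rightarrow> real" where
  "RQ E phi f = wip E (lap E phi f) f / wip E f f"

definition is_eigenfunction :: "('n::finite) set set \<Rightarrow> ('n \<Rightarrow> 'n set \<Rightarrow> int) \<Rightarrow> real \<Rightarrow> real^'n \<Rightarrow> bool" where
  "is_eigenfunction E phi lam f \<longleftrightarrow> f \<noteq> 0 \<and> lap E phi f = lam *\<^sub>R f"

definition eigenvalues :: "('n::finite) set set \<Rightarrow> ('n \<Rightarrow> 'n set \<Rightarrow> int) \<Rightarrow> real set" where
  "eigenvalues E phi = {lam. \<exists>f. is_eigenfunction E phi lam f}"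

definition lam_min :: "('n::finite) set set \<Rightarrow> ('n \<Rightarrow> 'n set \<Rightarrow> int) \<Rightarrow> real" where
  "lam_min E phi = Min (eigenvalues E phi)"

definition lam_max :: "('n::finite) set set \<Rightarrow> ('n \<Rightarrow> 'n set \<Rightarrow> int) \<Rightarrow> real" where
  "lam_max E phi = Max (eigenvalues E phi)"

text \<open>Multiplicity: dimension of the eigenspace (L is self-adjoint, hence diagonalizable,
  so this equals the algebraic multiplicity).\<close>
definition mult :: "('n::finite) set set \<Rightarrow> ('n \<Rightarrow> 'n set \<Rightarrow> int) \<Rightarrow> real \<Rightarrow> nat" where
  "mult E phi lam = dim {f. lap E phi f = lam *\<^sub>R f}"

definition proper_strong_coloring :: "'n set set \<Rightarrow> nat \<Rightarrow> ('n \<Rightarrow> nat) \<Rightarrow> bool" where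
  "proper_strong_coloring E k c \<longleftrightarrow>
     (\<forall>v. c v \<in> {1..k}) \<and> (\<forall>e\<in>E. \<forall>v\<in>e. \<forall>w\<in>e. v \<noteq> w \<longrightarrow> c v \<noteq> c w)"

definition chrom :: "'n set set \<Rightarrow> nat" where
  "chrom E = (LEAST k. \<exists>c. proper_strong_coloring E k c)"

definition Sg :: "('n::finite) set set \<Rightarrow> ('n \<Rightarrow> 'n set \<Rightarrow> int) \<Rightarrow> real^'n \<Rightarrow> ('n \<Rightarrow> nat) \<Rightarrow> nat \<Rightarrow> nat \<Rightarrow> real" where
  "Sg E phi g c i j = (\<Sum>v\<in>{v. c v = i}. \<Sum>w\<in>{w. c w = j}. adj E phi v w * g $ v * g $ w)"

definition gij :: "real^'n \<Rightarrow> ('n \<Rightarrow> nat) \<Rightarrow> nat \<Rightarrow> nat \<Rightarrow> real^'n" where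
  "gij g c i j = (\<chi> v. if c v = i then g $ v else if c v = j then - g $ v else 0)"

end

theory Submission
  imports Defs
begin

(* Proof idea. lambda_1 is the minimum of the Rayleigh quotient, whose numerator is
   <f,f> - sum A(v,w) f(v) f(w). For an eigenfunction g of eigenvalue mu and a proper coloring
   with classes V_1..V_k, let n_i be the weighted norm of g on V_i. As A vanishes inside a class,
   <L g_ij, g_ij> - lambda_1 <g_ij, g_ij> = (1 - lambda_1)(n_i + n_j) + 2 S_ij >= 0, and these
   terms sum over all ordered pairs i /= j to 2 (k (1 - lambda_1) - (mu - lambda_1)) <g,g>.
   Equality in the coloring bound makes every term vanish: each g_ij attains the minimum of the
   Rayleigh quotient, hence is a lambda_1-eigenfunction, no n_i can be 0 (else all would be), and
   so S_ij < 0. The g_1j are independent because g_1j is the only one supported on V_j; a second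
   lambda_N-eigenfunction h vanishing at a point of V_2 where g does not yields one more
   independent eigenfunction h_12. *)

section \<open>Linear algebra\<close>

lemma psd_bilinear_self_eq_0D:
  fixes B :: "'a::real_vector \<Rightarrow> 'a \<Rightarrow> real"
  assumes B: "bilinear B" and sym: "\<And>x y. B x y = B y x" and psd: "\<And>x. 0 \<le> B x x"
    and "B f f = 0"
  shows "B f y = 0"
proof -
  define b q where "b = B f y" and "q = B y y"
  have expand: "B (f + t *\<^sub>R y) (f + t *\<^sub>R y) = 2 * t * b + t\<^sup>2 * q" for t
  proof -
    have "B (f + t *\<^sub>R y) (f + t *\<^sub>R y) = B f f + t * B f y + t * B y f + t * t * B y y"
      unfolding bilinear_ladd[OF B] bilinear_radd[OF B] bilinear_lmul[OF B] bilinear_rmul[OF B]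
      by (simp add: algebra_simps)
    then show ?thesis
      using \<open>B f f = 0\<close> sym[of y f] by (simp add: b_def q_def power2_eq_square)
  qed
  have "q \<ge> 0"
    unfolding q_def by (rule psd)
  define t where "t = - b / (q + 1)"
  have b_eq: "b = - t * (q + 1)"
    using \<open>q \<ge> 0\<close> by (simp add: t_def)
  have "0 \<le> - t\<^sup>2 * (q + 2)"
    using psd[of "f + t *\<^sub>R y"] unfolding expand b_eq by (simp add: power2_eq_square algebra_simps)
  then have "t\<^sup>2 \<le> 0"
    using \<open>q \<ge> 0\<close> by (simp add: mult_le_0_iff)
  then have "t = 0"
    by simp
  then show ?thesis
    using b_eq b_def by simp
qed

lemma sum_off_diagonal_add:
  fixes n :: "'a \<Rightarrow> real"
  assumes "finite I"
  shows "(\<Sum>i\<in>I. \<Sum>j\<in>I-{i}. n i + n j) = 2 * (real (card I) - 1) * sum n I"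
proof -
  have "(\<Sum>j\<in>I-{i}. n i + n j) = (real (card I) - 1) * n i + (sum n I - n i)" if "i \<in> I" for i
  proof -
    have "0 < card I"
      using that assms by (auto simp: card_gt_0_iff)
    then show ?thesis
      using that assms by (simp add: sum.distrib sum_diff1 of_nat_diff)
  qed
  then have "(\<Sum>i\<in>I. \<Sum>j\<in>I-{i}. n i + n j) = (\<Sum>i\<in>I. (real (card I) - 1) * n i + (sum n I - n i))"
    by (rule sum.cong[OF refl])
  also have "\<dots> = (real (card I) - 1) * sum n I + (real (card I) * sum n I - sum n I)"
    by (simp add: sum.distrib sum_subtractf sum_distrib_left)
  finally show ?thesis
    by (simp add: algebra_simps)
qed

lemma echelon_scalars_eq_0:
  fixes F :: "'i::linorder \<Rightarrow> real^'n"
  assumes "finite I"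
    and echelon: "\<And>i. i \<in> I \<Longrightarrow> \<exists>v. F i $ v \<noteq> 0 \<and> (\<forall>j\<in>I. j < i \<longrightarrow> F j $ v = 0)"
    and "(\<Sum>i\<in>I. a i *\<^sub>R F i) = 0"
  shows "\<forall>i\<in>I. a i = 0"
proof (rule ccontr)
  assume "\<not> (\<forall>i\<in>I. a i = 0)"
  then have ne: "{i\<in>I. a i \<noteq> 0} \<noteq> {}" and fin: "finite {i\<in>I. a i \<noteq> 0}"
    using \<open>finite I\<close> by auto
  define m where "m = Max {i\<in>I. a i \<noteq> 0}"
  have "m \<in> I" and "a m \<noteq> 0"
    using Max_in[OF fin ne] unfolding m_def by auto
  have above: "a i = 0" if "i \<in> I" and "m < i" for i
  proof (rule ccontr)
    assume "a i \<noteq> 0"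
    then have "i \<le> m"
      unfolding m_def using \<open>i \<in> I\<close> by (intro Max_ge[OF fin]) simp
    then show False
      using \<open>m < i\<close> by simp
  qed
  obtain v where "F m $ v \<noteq> 0" and below: "\<forall>j\<in>I. j < m \<longrightarrow> F j $ v = 0"
    using echelon[OF \<open>m \<in> I\<close>] by blast
  have "0 = (\<Sum>i\<in>I. a i * F i $ v)"
    using assms(3) by (simp add: vec_eq_iff sum_component)
  also have "\<dots> = (\<Sum>i\<in>{m}. a i * F i $ v)"
  proof (intro sum.mono_neutral_right ballI)
    fix i assume "i \<in> I - {m}"
    then consider "i < m" | "m < i"
      by fastforce
    then show "a i * F i $ v = 0"
      using \<open>i \<in> I - {m}\<close> above below by cases auto
  qed (use \<open>finite I\<close> \<open>m \<in> I\<close> in auto)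
  finally show False
    using \<open>a m \<noteq> 0\<close> \<open>F m $ v \<noteq> 0\<close> by simp
qed

lemma echelon_independent:
  fixes F :: "'i::linorder \<Rightarrow> real^'n"
  assumes "finite I"
    and echelon: "\<And>i. i \<in> I \<Longrightarrow> \<exists>v. F i $ v \<noteq> 0 \<and> (\<forall>j\<in>I. j < i \<longrightarrow> F j $ v = 0)"
  shows "inj_on F I" and "independent (F ` I)"
proof -
  show inj: "inj_on F I"
  proof (rule linorder_inj_onI)
    fix i j assume "i < j" "i \<in> I" "j \<in> I"
    then show "F i \<noteq> F j"
      using echelon[of j] by auto
  qed auto
  show "independent (F ` I)"
  proof (rule independent_if_scalars_zero)
    fix b x assume sum: "(\<Sum>x\<in>F ` I. b x *\<^sub>R x) = 0" and "x \<in> F ` I"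
    have "(\<Sum>i\<in>I. b (F i) *\<^sub>R F i) = 0"
      using sum by (simp add: sum.reindex[OF inj])
    with \<open>finite I\<close> echelon have "\<forall>i\<in>I. b (F i) = 0"
      by (rule echelon_scalars_eq_0)
    then show "b x = 0"
      using \<open>x \<in> F ` I\<close> by blast
  qed (use \<open>finite I\<close> in simp)
qed

section \<open>The quadratic form of the normalized Laplacian\<close>

definition adj_form :: "('n::finite) set set \<Rightarrow> ('n \<Rightarrow> 'n set \<Rightarrow> int) \<Rightarrow> real^'n \<Rightarrow> real^'n \<Rightarrow> real" where
  "adj_form E phi f h = (\<Sum>v\<in>UNIV. \<Sum>w\<in>UNIV. adj E phi v w * f $ v * h $ w)"

lemma deg_pos: "oriented_hypergraph E phi \<Longrightarrow> 0 < real (deg E v)"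
  unfolding oriented_hypergraph_def by (metis of_nat_0_less_iff less_le_trans zero_less_one)

lemma adj_commute: "adj E phi v w = adj E phi w v"
proof -
  have "{e \<in> E. v \<in> e \<and> w \<in> e \<and> phi v e = s * phi w e} = {e \<in> E. w \<in> e \<and> v \<in> e \<and> phi w e = s * phi v e}"
    if "s \<in> {-1, 1}" for s :: int
    using that by auto
  from this[of 1] this[of "-1"] show ?thesis
    unfolding adj_def by simp
qed

lemma adj_form_commute: "adj_form E phi f h = adj_form E phi h f"
  unfolding adj_form_def
  by (subst sum.swap) (simp add: adj_commute mult_ac)

lemma wip_commute: "wip E f h = wip E h f"
  unfolding wip_def by (simp add: mult_ac)

lemma bilinear_adj_form: "bilinear (adj_form E phi)"
  unfolding bilinear_def linear_iff adj_form_def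
  by (simp add: algebra_simps sum.distrib sum_distrib_left)

lemma bilinear_wip: "bilinear (wip E)"
  unfolding bilinear_def linear_iff wip_def
  by (simp add: algebra_simps sum.distrib sum_distrib_left)

lemma linear_lap: "linear (lap E phi)"
  unfolding linear_iff lap_def
  by (simp add: vec_eq_iff algebra_simps sum.distrib sum_distrib_left add_divide_distrib)

lemma wip_lap:
  assumes "oriented_hypergraph E phi"
  shows "wip E (lap E phi f) h = wip E f h - adj_form E phi h f"
proof -
  have "wip E (lap E phi f) h
      = (\<Sum>v\<in>UNIV. real (deg E v) * f $ v * h $ v - h $ v * (\<Sum>w\<in>UNIV. adj E phi v w * f $ w))"
    unfolding wip_def lap_def
    by (rule sum.cong) (use deg_pos[OF assms] in \<open>simp_all add: field_simps\<close>)
  then show ?thesis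
    by (simp add: wip_def adj_form_def sum_subtractf sum_distrib_left mult_ac)
qed

lemma wip_lap_commute:
  assumes "oriented_hypergraph E phi"
  shows "wip E (lap E phi f) h = wip E f (lap E phi h)"
proof -
  have "wip E f (lap E phi h) = wip E (lap E phi h) f"
    by (rule wip_commute)
  then show ?thesis
    by (simp add: wip_lap[OF assms] wip_commute[of E f h] adj_form_commute[of E phi f h])
qed

definition deg_scale :: "('n::finite) set set \<Rightarrow> real^'n \<Rightarrow> real^'n" where
  "deg_scale E f = (\<chi> v. sqrt (real (deg E v)) * f $ v)"

lemma wip_eq_inner_deg_scale: "wip E f h = deg_scale E f \<bullet> deg_scale E h"
proof -
  have sq: "sqrt (real n) * x * (sqrt (real n) * y) = real n * x * y" for n x y
  proof -
    have "sqrt (real n) * sqrt (real n) = real n"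
      by simp
    then show ?thesis
      by (metis mult.commute mult.left_commute)
  qed
  show ?thesis
    unfolding wip_def deg_scale_def inner_vec_def by (simp add: sq)
qed

lemma wip_self_nonneg: "0 \<le> wip E f f"
  by (simp add: wip_eq_inner_deg_scale)

lemma wip_self_eq_0_iff:
  assumes "oriented_hypergraph E phi"
  shows "wip E f f = 0 \<longleftrightarrow> f = 0"
proof -
  have nz: "deg E v \<noteq> 0" for v
    using deg_pos[OF assms] by simp
  show ?thesis
    by (simp add: nz wip_eq_inner_deg_scale deg_scale_def vec_eq_iff)
qed

lemma wip_self_pos: "oriented_hypergraph E phi \<Longrightarrow> f \<noteq> 0 \<Longrightarrow> 0 < wip E f f"
  using wip_self_nonneg wip_self_eq_0_iff by (metis order_le_less)

lemma norm_le_norm_deg_scale: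
  assumes "oriented_hypergraph E phi"
  shows "norm f \<le> norm (deg_scale E f)"
proof (rule norm_le_componentwise_cart)
  fix v
  have "1 \<le> sqrt (real (deg E v))"
    using assms unfolding oriented_hypergraph_def by simp
  then show "norm (f $ v) \<le> norm (deg_scale E f $ v)"
    by (simp add: deg_scale_def abs_mult mult_le_cancel_right1)
qed

lemma wip_scaleR_self: "wip E (a *\<^sub>R f) (a *\<^sub>R f) = a\<^sup>2 * wip E f f"
  by (simp add: bilinear_lmul[OF bilinear_wip] bilinear_rmul[OF bilinear_wip] power2_eq_square)

lemma wip_lap_scaleR_self: "wip E (lap E phi (a *\<^sub>R f)) (a *\<^sub>R f) = a\<^sup>2 * wip E (lap E phi f) f"
  by (simp add: linear_scale[OF linear_lap] bilinear_lmul[OF bilinear_wip]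
      bilinear_rmul[OF bilinear_wip] power2_eq_square)

lemma RQ_eigenfunction:
  assumes "oriented_hypergraph E phi" and "is_eigenfunction E phi lam f"
  shows "RQ E phi f = lam"
proof -
  have "f \<noteq> 0"
    using assms(2) by (simp add: is_eigenfunction_def)
  then have "wip E f f \<noteq> 0"
    using wip_self_pos[OF assms(1)] by fastforce
  then show ?thesis
    using assms(2) by (simp add: RQ_def is_eigenfunction_def bilinear_lmul[OF bilinear_wip])
qed

section \<open>Eigenvalues and eigenspaces\<close>

lemma wip_eq_0_if_eigenvalues_ne:
  assumes "oriented_hypergraph E phi"
    and "lap E phi f = a *\<^sub>R f" and "lap E phi h = b *\<^sub>R h" and "a \<noteq> b"
  shows "wip E f h = 0"
proof -
  have "a * wip E f h = b * wip E f h"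
    using wip_lap_commute[OF assms(1), of f h] assms(2,3)
    by (simp add: bilinear_lmul[OF bilinear_wip] bilinear_rmul[OF bilinear_wip])
  then show ?thesis
    using \<open>a \<noteq> b\<close> by simp
qed

lemma lap_eq_if_rayleigh_minimal:
  assumes hyp: "oriented_hypergraph E phi"
    and lower: "\<And>h. mu * wip E h h \<le> wip E (lap E phi h) h"
    and eq: "wip E (lap E phi f) f = mu * wip E f f"
  shows "lap E phi f = mu *\<^sub>R f"
proof -
  define B where "B x y = wip E (lap E phi x) y - mu * wip E x y" for x y
  have "bilinear B"
    using linear_lap[of E phi] bilinear_wip[of E]
    unfolding bilinear_def linear_iff B_def by (simp add: algebra_simps)
  moreover have "B x y = B y x" for x y
    unfolding B_def
    by (simp add: wip_lap_commute[OF hyp] wip_commute[of E x y] wip_commute[of E x "lap E phi y"])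
  moreover have "0 \<le> B x x" for x
    unfolding B_def using lower[of x] by simp
  moreover have "B f f = 0"
    unfolding B_def using eq by simp
  ultimately have "B f (lap E phi f - mu *\<^sub>R f) = 0"
    by (rule psd_bilinear_self_eq_0D)
  then have "wip E (lap E phi f - mu *\<^sub>R f) (lap E phi f - mu *\<^sub>R f) = 0"
    unfolding B_def by (simp add: bilinear_lsub[OF bilinear_wip] bilinear_lmul[OF bilinear_wip])
  then show ?thesis
    using wip_self_eq_0_iff[OF hyp] by simp
qed

lemma exists_rayleigh_minimizer:
  fixes E :: "('n::finite) set set"
  assumes hyp: "oriented_hypergraph E phi"
  shows "\<exists>mu. mu \<in> eigenvalues E phi \<and> (\<forall>h. mu * wip E h h \<le> wip E (lap E phi h) h)"
proof -
  define K where "K = {x::real^'n. wip E x x = 1}"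
  define normalize where "normalize h = (1 / sqrt (wip E h h)) *\<^sub>R h" for h :: "real^'n"
  have normalize_in_K: "normalize h \<in> K" if "h \<noteq> 0" for h
    using wip_self_pos[OF hyp that]
    by (simp add: K_def normalize_def wip_scaleR_self power_divide)
  have cont_wip: "continuous_on UNIV (\<lambda>x::real^'n. wip E x x)"
    unfolding wip_def by (intro continuous_intros)
  have cont_quad: "continuous_on UNIV (\<lambda>x::real^'n. wip E (lap E phi x) x)"
    unfolding wip_lap[OF hyp] unfolding wip_def adj_form_def by (intro continuous_intros)
  have "bounded K"
  proof -
    have "norm x \<le> 1" if "x \<in> K" for x
      using norm_le_norm_deg_scale[OF hyp, of x] that
      by (simp add: K_def wip_eq_inner_deg_scale norm_eq_sqrt_inner)
    then show ?thesis
      unfolding bounded_iff by blast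
  qed
  moreover have "closed K"
    unfolding K_def by (intro closed_Collect_eq cont_wip continuous_on_const)
  ultimately have "compact K"
    by (simp add: compact_eq_bounded_closed)
  moreover have "K \<noteq> {}"
    using normalize_in_K[of "vec 1"] by (auto simp: vec_eq_iff)
  ultimately have "\<exists>f\<in>K. \<forall>y\<in>K. wip E (lap E phi f) f \<le> wip E (lap E phi y) y"
    by (intro continuous_attains_inf continuous_on_subset[OF cont_quad]) auto
  then obtain f where "f \<in> K"
    and f_min: "\<And>y. y \<in> K \<Longrightarrow> wip E (lap E phi f) f \<le> wip E (lap E phi y) y"
    by blast
  define mu where "mu = wip E (lap E phi f) f"
  have lower: "mu * wip E h h \<le> wip E (lap E phi h) h" for h
  proof (cases "h = 0")
    case True
    then show ?thesis
      by (simp add: linear_0[OF linear_lap] bilinear_lzero[OF bilinear_wip])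
  next
    case False
    have "mu \<le> wip E (lap E phi (normalize h)) (normalize h)"
      unfolding mu_def using f_min normalize_in_K[OF False] .
    also have "\<dots> = wip E (lap E phi h) h / wip E h h"
      using wip_self_nonneg[of E h] by (simp add: normalize_def wip_lap_scaleR_self power_divide)
    finally show ?thesis
      using wip_self_pos[OF hyp False] by (simp add: field_simps)
  qed
  have "wip E f f = 1"
    using \<open>f \<in> K\<close> by (simp add: K_def)
  then have "lap E phi f = mu *\<^sub>R f"
    by (intro lap_eq_if_rayleigh_minimal[OF hyp lower]) (simp add: mu_def)
  moreover have "f \<noteq> 0"
    using \<open>wip E f f = 1\<close> by (auto simp: bilinear_lzero[OF bilinear_wip])
  ultimately have "mu \<in> eigenvalues E phi"
    unfolding eigenvalues_def is_eigenfunction_def by blast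
  with lower show ?thesis
    by blast
qed

lemma finite_eigenvalues:
  fixes E :: "('n::finite) set set"
  assumes hyp: "oriented_hypergraph E phi"
  shows "finite (eigenvalues E phi)"
proof -
  define G where "G lam = deg_scale E (SOME f. is_eigenfunction E phi lam f)" for lam
  have G: "\<exists>f. is_eigenfunction E phi lam f \<and> G lam = deg_scale E f" if "lam \<in> eigenvalues E phi" for lam
  proof -
    have "is_eigenfunction E phi lam (SOME f. is_eigenfunction E phi lam f)"
      using that unfolding eigenvalues_def mem_Collect_eq by (rule someI_ex)
    then show ?thesis
      unfolding G_def by blast
  qed
  have G_pos: "0 < G lam \<bullet> G lam" if lam: "lam \<in> eigenvalues E phi" for lam
  proof -
    obtain f where "f \<noteq> 0" and "G lam = deg_scale E f"
      using G[OF lam] unfolding is_eigenfunction_def by blast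
    then show ?thesis
      using wip_self_pos[OF hyp \<open>f \<noteq> 0\<close>] by (simp add: wip_eq_inner_deg_scale)
  qed
  have G_orth: "G a \<bullet> G b = 0" if "a \<in> eigenvalues E phi" "b \<in> eigenvalues E phi" "a \<noteq> b" for a b
    using G[OF that(1)] G[OF that(2)] wip_eq_0_if_eigenvalues_ne[OF hyp _ _ that(3)]
    by (auto simp: is_eigenfunction_def wip_eq_inner_deg_scale[symmetric])
  have "inj_on G (eigenvalues E phi)"
    using G_pos G_orth by (fastforce intro: inj_onI)
  moreover have "independent (G ` eigenvalues E phi)"
    using G_pos G_orth
    by (intro pairwise_orthogonal_independent) (fastforce simp: pairwise_def orthogonal_def)+
  then have "finite (G ` eigenvalues E phi)"
    using independent_bound by blast
  ultimately show ?thesis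
    using finite_imageD by blast
qed

lemma rayleigh_lower_bound_le_eigenvalue:
  assumes hyp: "oriented_hypergraph E phi"
    and lower: "\<And>h. mu * wip E h h \<le> wip E (lap E phi h) h"
    and "lam \<in> eigenvalues E phi"
  shows "mu \<le> lam"
proof -
  obtain f where "f \<noteq> 0" and "lap E phi f = lam *\<^sub>R f"
    using \<open>lam \<in> eigenvalues E phi\<close> unfolding eigenvalues_def is_eigenfunction_def by blast
  then have "mu * wip E f f \<le> lam * wip E f f"
    using lower[of f] by (simp add: bilinear_lmul[OF bilinear_wip])
  then show ?thesis
    using wip_self_pos[OF hyp \<open>f \<noteq> 0\<close>] by simp
qed

lemma lam_min_rayleigh:
  fixes E :: "('n::finite) set set"
  assumes hyp: "oriented_hypergraph E phi"
  shows "lam_min E phi * wip E h h \<le> wip E (lap E phi h) h"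
proof -
  obtain mu where mu: "mu \<in> eigenvalues E phi"
    and lower: "\<And>h. mu * wip E h h \<le> wip E (lap E phi h) h"
    using exists_rayleigh_minimizer[OF hyp] by blast
  have "lam_min E phi = mu"
    unfolding lam_min_def using mu rayleigh_lower_bound_le_eigenvalue[OF hyp lower]
    by (intro Min_eqI finite_eigenvalues[OF hyp]) auto
  then show ?thesis
    using lower by simp
qed

lemma card_le_mult_if_echelon:
  fixes F :: "'i::linorder \<Rightarrow> real^'n::finite"
  assumes "finite I"
    and eigen: "\<And>i. i \<in> I \<Longrightarrow> lap E phi (F i) = lam *\<^sub>R F i"
    and echelon: "\<And>i. i \<in> I \<Longrightarrow> \<exists>v. F i $ v \<noteq> 0 \<and> (\<forall>j\<in>I. j < i \<longrightarrow> F j $ v = 0)"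
  shows "card I \<le> mult E phi lam"
proof -
  have "card I = card (F ` I)"
    using echelon_independent(1)[OF assms(1) echelon] by (simp add: card_image)
  also have "\<dots> \<le> dim {f. lap E phi f = lam *\<^sub>R f}"
    using eigen echelon_independent(2)[OF assms(1) echelon] by (intro independent_card_le_dim) auto
  finally show ?thesis
    unfolding mult_def .
qed

lemma exists_eigenfunction_vanishing_at:
  assumes "1 < mult E phi mu" and "lap E phi g = mu *\<^sub>R g" and "g $ v \<noteq> 0"
  shows "\<exists>h. lap E phi h = mu *\<^sub>R h \<and> h \<noteq> 0 \<and> h $ v = 0"
proof -
  let ?W = "{f. lap E phi f = mu *\<^sub>R f}"
  have "\<not> ?W \<subseteq> span {g}"
  proof
    assume "?W \<subseteq> span {g}"
    then have "dim ?W \<le> dim (span {g})"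
      by (rule dim_subset)
    also have "\<dots> = dim {g}"
      by (rule dim_span)
    also have "\<dots> \<le> 1"
      using dim_le_card'[of "{g}"] by simp
    finally show False
      using assms(1) unfolding mult_def by simp
  qed
  then obtain f where f: "lap E phi f = mu *\<^sub>R f" and "f \<notin> span {g}"
    by auto
  define h where "h = f - (f $ v / g $ v) *\<^sub>R g"
  have "lap E phi h = mu *\<^sub>R h"
    unfolding h_def using f assms(2)
    by (simp add: linear_diff[OF linear_lap] linear_scale[OF linear_lap] algebra_simps)
  moreover have "h \<noteq> 0"
  proof
    assume "h = 0"
    then have "f = (f $ v / g $ v) *\<^sub>R g"
      unfolding h_def by simp
    also have "\<dots> \<in> span {g}"
      by (intro span_scale span_base) simp
    finally show False
      using \<open>f \<notin> span {g}\<close> by simp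
  qed
  moreover have "h $ v = 0"
    using assms(3) by (simp add: h_def)
  ultimately show ?thesis
    by blast
qed

section \<open>Color classes\<close>

lemma adj_eq_0_if_same_color:
  assumes "proper_strong_coloring E k c" and "c v = c w"
  shows "adj E phi v w = 0"
proof (cases "v = w")
  case False
  then have anti: "{e \<in> E. v \<in> e \<and> w \<in> e \<and> phi v e = - phi w e} = {}"
    and co: "{e \<in> E. v \<in> e \<and> w \<in> e \<and> phi v e = phi w e} = {}"
    using assms unfolding proper_strong_coloring_def by blast+
  show ?thesis
    unfolding adj_def anti co by simp
qed (simp add: adj_def)

lemma proper_strong_coloring_range: "proper_strong_coloring E k c \<Longrightarrow> c v \<in> {1..k}"
  unfolding proper_strong_coloring_def by simp

lemma two_le_colors_if_adj_ne_0:
  assumes "proper_strong_coloring E k c" and "adj E phi v w \<noteq> 0"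
  shows "2 \<le> k"
proof -
  have "c v \<noteq> c w"
    using adj_eq_0_if_same_color[OF assms(1)] assms(2) by metis
  moreover have "c v \<in> {1..k}" and "c w \<in> {1..k}"
    using proper_strong_coloring_range[OF assms(1)] by auto
  ultimately show ?thesis
    by auto
qed

definition class_part :: "real^'n \<Rightarrow> ('n \<Rightarrow> nat) \<Rightarrow> nat \<Rightarrow> real^'n" where
  "class_part g c i = (\<chi> v. if c v = i then g $ v else 0)"

definition class_norm :: "('n::finite) set set \<Rightarrow> real^'n \<Rightarrow> ('n \<Rightarrow> nat) \<Rightarrow> nat \<Rightarrow> real" where
  "class_norm E g c i = wip E (class_part g c i) (class_part g c i)"

lemma sum_class_parts:
  assumes "finite I" and "\<And>v. c v \<in> I"
  shows "(\<Sum>i\<in>I. class_part g c i) = g"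
  using assms by (simp add: vec_eq_iff sum_component class_part_def)

lemma bilinear_class_parts:
  assumes "bilinear B" and "finite I" and "\<And>v. c v \<in> I"
  shows "B f h = (\<Sum>i\<in>I. \<Sum>j\<in>I. B (class_part f c i) (class_part h c j))"
  using bilinear_sum[OF assms(1), of "class_part f c" I "class_part h c" I]
  by (simp add: sum_class_parts[OF assms(2,3)] sum.cartesian_product)

lemma wip_class_parts_eq_0: "i \<noteq> j \<Longrightarrow> wip E (class_part f c i) (class_part h c j) = 0"
  unfolding wip_def class_part_def by (intro sum.neutral) auto

lemma adj_form_same_class_parts:
  assumes "proper_strong_coloring E k c"
  shows "adj_form E phi (class_part f c i) (class_part h c i) = 0"
  unfolding adj_form_def class_part_def
  by (intro sum.neutral ballI) (simp add: adj_eq_0_if_same_color[OF assms])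

lemma Sg_eq_adj_form: "Sg E phi g c i j = adj_form E phi (class_part g c i) (class_part g c j)"
proof -
  have filter: "(\<Sum>v\<in>UNIV. if P v then F v else 0) = (\<Sum>v\<in>{v. P v}. F v)"
    for P and F :: "'a::finite \<Rightarrow> real"
    by (simp add: sum.inter_filter[symmetric])
  have "adj_form E phi (class_part g c i) (class_part g c j)
      = (\<Sum>v\<in>UNIV. if c v = i
          then (\<Sum>w\<in>UNIV. if c w = j then adj E phi v w * g $ v * g $ w else 0) else 0)"
    unfolding adj_form_def class_part_def by (intro sum.cong refl) (auto intro!: sum.cong)
  then show ?thesis
    by (simp add: Sg_def filter)
qed

lemma gij_eq_class_parts: "i \<noteq> j \<Longrightarrow> gij g c i j = class_part g c i - class_part g c j"
  by (simp add: gij_def class_part_def vec_eq_iff)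

lemma gij_apply: "gij g c i j $ v = (if c v = i then g $ v else if c v = j then - g $ v else 0)"
  by (simp add: gij_def)

lemma wip_gij_self: "i \<noteq> j \<Longrightarrow> wip E (gij g c i j) (gij g c i j) = class_norm E g c i + class_norm E g c j"
  by (simp add: gij_eq_class_parts class_norm_def bilinear_lsub[OF bilinear_wip]
      bilinear_rsub[OF bilinear_wip] wip_class_parts_eq_0)

lemma wip_lap_gij_self:
  assumes "oriented_hypergraph E phi" and "proper_strong_coloring E k c" and "i \<noteq> j"
  shows "wip E (lap E phi (gij g c i j)) (gij g c i j)
    = class_norm E g c i + class_norm E g c j + 2 * Sg E phi g c i j"
  using adj_form_commute[of E phi "class_part g c i" "class_part g c j"]
  unfolding wip_lap[OF assms(1)] wip_gij_self[OF assms(3)]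
  by (simp add: gij_eq_class_parts[OF assms(3)] Sg_eq_adj_form
      bilinear_lsub[OF bilinear_adj_form] bilinear_rsub[OF bilinear_adj_form]
      adj_form_same_class_parts[OF assms(2)])

lemma wip_self_eq_sum_class_norm:
  assumes "finite I" and "\<And>v. c v \<in> I"
  shows "wip E f f = (\<Sum>i\<in>I. class_norm E f c i)"
proof -
  have "wip E f f = (\<Sum>i\<in>I. \<Sum>j\<in>I. wip E (class_part f c i) (class_part f c j))"
    using assms by (intro bilinear_class_parts bilinear_wip)
  then show ?thesis
    using assms(1) by (simp add: class_norm_def wip_class_parts_eq_0 sum.remove)
qed

lemma adj_form_self_eq_sum_Sg:
  assumes "proper_strong_coloring E k c"
  shows "adj_form E phi f f = (\<Sum>i\<in>{1..k}. \<Sum>j\<in>{1..k}-{i}. Sg E phi f c i j)"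
proof -
  have "adj_form E phi f f = (\<Sum>i\<in>{1..k}. \<Sum>j\<in>{1..k}. Sg E phi f c i j)"
    unfolding Sg_eq_adj_form
    by (intro bilinear_class_parts bilinear_adj_form proper_strong_coloring_range[OF assms]
        finite_atLeastAtMost)
  then show ?thesis
    by (simp add: sum.remove Sg_eq_adj_form adj_form_same_class_parts[OF assms])
qed

lemma sum_class_pair_excess:
  assumes hyp: "oriented_hypergraph E phi" and col: "proper_strong_coloring E k c"
    and f: "lap E phi f = mu *\<^sub>R f"
  shows "(\<Sum>i\<in>{1..k}. \<Sum>j\<in>{1..k}-{i}.
      (1 - l) * (class_norm E f c i + class_norm E f c j) + 2 * Sg E phi f c i j)
    = 2 * (real k * (1 - l) - (mu - l)) * wip E f f"
proof -
  let ?I = "{1..k}" and ?n = "class_norm E f c"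
  have "wip E f f = sum ?n ?I"
    by (intro wip_self_eq_sum_class_norm finite_atLeastAtMost proper_strong_coloring_range[OF col])
  then have norms: "(\<Sum>i\<in>?I. \<Sum>j\<in>?I-{i}. ?n i + ?n j) = 2 * (real k - 1) * wip E f f"
    using sum_off_diagonal_add[of ?I ?n] by simp
  have "(1 - mu) * wip E f f = adj_form E phi f f"
    using wip_lap[OF hyp, of f f] f by (simp add: bilinear_lmul[OF bilinear_wip] algebra_simps)
  then have Sgs: "(\<Sum>i\<in>?I. \<Sum>j\<in>?I-{i}. Sg E phi f c i j) = (1 - mu) * wip E f f"
    by (simp add: adj_form_self_eq_sum_Sg[OF col])
  have "(\<Sum>i\<in>?I. \<Sum>j\<in>?I-{i}. (1 - l) * (?n i + ?n j) + 2 * Sg E phi f c i j)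
      = (1 - l) * (\<Sum>i\<in>?I. \<Sum>j\<in>?I-{i}. ?n i + ?n j) + 2 * (\<Sum>i\<in>?I. \<Sum>j\<in>?I-{i}. Sg E phi f c i j)"
    by (simp only: sum.distrib sum_distrib_left distrib_left)
  also have "\<dots> = 2 * (real k * (1 - l) - (mu - l)) * wip E f f"
    unfolding norms Sgs by (simp add: algebra_simps)
  finally show ?thesis .
qed

section \<open>Equality in the coloring bound\<close>

(* bound_eq is equality in the coloring bound k >= (mu - lambda_1) / (1 - lambda_1), cleared
   of its denominator. *)
locale chromatic_bound_equality =
  fixes E :: "('n::finite) set set" and phi :: "'n \<Rightarrow> 'n set \<Rightarrow> int"
    and k :: nat and c :: "'n \<Rightarrow> nat" and mu :: real
  assumes hypergraph: "oriented_hypergraph E phi"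
    and coloring: "proper_strong_coloring E k c"
    and bound_eq: "real k * (1 - lam_min E phi) = mu - lam_min E phi"
    and lam_min_less_1: "lam_min E phi < 1"
begin

lemma class_pair_excess_eq_0:
  assumes f: "lap E phi f = mu *\<^sub>R f" and "i \<in> {1..k}" "j \<in> {1..k}" "i \<noteq> j"
  shows "(1 - lam_min E phi) * (class_norm E f c i + class_norm E f c j) + 2 * Sg E phi f c i j = 0"
proof -
  let ?l = "lam_min E phi" and ?I = "{1..k}"
  define excess where
    "excess i j = (1 - ?l) * (class_norm E f c i + class_norm E f c j) + 2 * Sg E phi f c i j" for i j
  have excess_nonneg: "0 \<le> excess i j" if "i \<noteq> j" for i j
    using lam_min_rayleigh[OF hypergraph, of "gij f c i j"]
    unfolding excess_def wip_lap_gij_self[OF hypergraph coloring that] wip_gij_self[OF that]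
    by (simp add: algebra_simps)
  have "(\<Sum>i\<in>?I. \<Sum>j\<in>?I-{i}. excess i j) = 0"
    unfolding excess_def sum_class_pair_excess[OF hypergraph coloring f] by (simp add: bound_eq)
  moreover have "0 \<le> (\<Sum>j\<in>?I-{i}. excess i j)" for i
    by (intro sum_nonneg) (simp add: excess_nonneg)
  ultimately have "(\<Sum>j\<in>?I-{i}. excess i j) = 0"
    using \<open>i \<in> ?I\<close> by (simp add: sum_nonneg_eq_0_iff)
  then have "\<forall>j\<in>?I-{i}. excess i j = 0"
    by (subst (asm) sum_nonneg_eq_0_iff) (auto intro: excess_nonneg)
  then show ?thesis
    using \<open>j \<in> ?I\<close> \<open>i \<noteq> j\<close> unfolding excess_def by simp
qed

lemma class_support:
  assumes f: "lap E phi f = mu *\<^sub>R f" and "f \<noteq> 0" and "i \<in> {1..k}"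
  shows "\<exists>v. c v = i \<and> f $ v \<noteq> 0"
proof (rule ccontr)
  assume none: "\<not> (\<exists>v. c v = i \<and> f $ v \<noteq> 0)"
  then have "class_part f c i = 0"
    by (auto simp: class_part_def vec_eq_iff)
  then have norm_i: "class_norm E f c i = 0" and Sg_i: "\<And>j. Sg E phi f c i j = 0"
    by (simp_all add: class_norm_def Sg_eq_adj_form bilinear_lzero[OF bilinear_wip]
        bilinear_lzero[OF bilinear_adj_form])
  have "f $ v = 0" for v
  proof (cases "c v = i")
    case False
    then have "(1 - lam_min E phi) * class_norm E f c (c v) = 0"
      using class_pair_excess_eq_0[OF f \<open>i \<in> {1..k}\<close> proper_strong_coloring_range[OF coloring]] norm_i Sg_i by simp
    then have "class_part f c (c v) = 0"
      using lam_min_less_1 wip_self_eq_0_iff[OF hypergraph] by (simp add: class_norm_def)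
    then have "class_part f c (c v) $ v = 0"
      by simp
    then show ?thesis
      by (simp add: class_part_def)
  qed (use none in auto)
  then show False
    using \<open>f \<noteq> 0\<close> by (simp add: vec_eq_iff)
qed

lemma class_norm_pos:
  assumes "lap E phi f = mu *\<^sub>R f" and "f \<noteq> 0" and "i \<in> {1..k}"
  shows "0 < class_norm E f c i"
proof -
  obtain v where "c v = i" and "f $ v \<noteq> 0"
    using class_support[OF assms] by blast
  then have "class_part f c i \<noteq> 0"
    by (auto simp: class_part_def vec_eq_iff)
  then show ?thesis
    unfolding class_norm_def by (rule wip_self_pos[OF hypergraph])
qed

lemma Sg_neg:
  assumes "lap E phi f = mu *\<^sub>R f" and "f \<noteq> 0" and "i \<in> {1..k}" "j \<in> {1..k}" "i \<noteq> j"
  shows "Sg E phi f c i j < 0"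
proof -
  have "0 < (1 - lam_min E phi) * (class_norm E f c i + class_norm E f c j)"
    using class_norm_pos[OF assms(1-3)] wip_self_nonneg[of E "class_part f c j"] lam_min_less_1
    by (simp add: class_norm_def)
  then show ?thesis
    using class_pair_excess_eq_0[OF assms(1,3-5)] by simp
qed

lemma gij_eigenfunction:
  assumes "lap E phi f = mu *\<^sub>R f" and "f \<noteq> 0" and "i \<in> {1..k}" "j \<in> {1..k}" "i \<noteq> j"
  shows "is_eigenfunction E phi (lam_min E phi) (gij f c i j)"
proof -
  have "wip E (lap E phi (gij f c i j)) (gij f c i j) = lam_min E phi * wip E (gij f c i j) (gij f c i j)"
    using class_pair_excess_eq_0[OF assms(1,3-5)]
    by (simp add: wip_lap_gij_self[OF hypergraph coloring \<open>i \<noteq> j\<close>] wip_gij_self[OF \<open>i \<noteq> j\<close>]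
        algebra_simps)
  then have "lap E phi (gij f c i j) = lam_min E phi *\<^sub>R gij f c i j"
    by (rule lap_eq_if_rayleigh_minimal[OF hypergraph lam_min_rayleigh[OF hypergraph]])
  moreover have "0 < wip E (gij f c i j) (gij f c i j)"
    using class_norm_pos[OF assms(1-3)] wip_self_nonneg[of E "class_part f c j"]
    by (simp add: wip_gij_self[OF \<open>i \<noteq> j\<close>] class_norm_def)
  then have "gij f c i j \<noteq> 0"
    by (auto simp: bilinear_lzero[OF bilinear_wip])
  ultimately show ?thesis
    unfolding is_eigenfunction_def by simp
qed

lemma mult_lam_min_ge:
  assumes f: "lap E phi f = mu *\<^sub>R f" and "f \<noteq> 0"
  shows "k - 1 \<le> mult E phi (lam_min E phi)"
proof -
  have "card {2..k} \<le> mult E phi (lam_min E phi)"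
  proof (rule card_le_mult_if_echelon)
    fix i assume "i \<in> {2..k}"
    then show "lap E phi (gij f c 1 i) = lam_min E phi *\<^sub>R gij f c 1 i"
      using gij_eigenfunction[OF f \<open>f \<noteq> 0\<close>, of 1 i] by (simp add: is_eigenfunction_def)
    obtain v where "c v = i" and "f $ v \<noteq> 0"
      using class_support[OF f \<open>f \<noteq> 0\<close>, of i] \<open>i \<in> {2..k}\<close> by auto
    then show "\<exists>v. gij f c 1 i $ v \<noteq> 0 \<and> (\<forall>j\<in>{2..k}. j < i \<longrightarrow> gij f c 1 j $ v = 0)"
      using \<open>i \<in> {2..k}\<close> by (auto simp: gij_apply)
  qed simp
  then show ?thesis
    by simp
qed

lemma mult_lam_min_gt:
  assumes f: "lap E phi f = mu *\<^sub>R f" and "f \<noteq> 0" and "2 \<le> k" and "1 < mult E phi mu"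
  shows "k - 1 < mult E phi (lam_min E phi)"
proof -
  obtain v0 where "c v0 = 2" and "f $ v0 \<noteq> 0"
    using class_support[OF f \<open>f \<noteq> 0\<close>, of 2] \<open>2 \<le> k\<close> by auto
  obtain h where h: "lap E phi h = mu *\<^sub>R h" and "h \<noteq> 0" and "h $ v0 = 0"
    using exists_eigenfunction_vanishing_at[OF \<open>1 < mult E phi mu\<close> f \<open>f $ v0 \<noteq> 0\<close>] by blast
  \<comment> \<open>Echelon form: on class j >= 3 only F j is nonzero, and F 1 = h_12 vanishes at v0.\<close>
  define F where "F j = (if j = 1 then gij h c 1 2 else gij f c 1 j)" for j
  have "card {1..k} \<le> mult E phi (lam_min E phi)"
  proof (rule card_le_mult_if_echelon)
    fix i assume i: "i \<in> {1..k}"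
    show "lap E phi (F i) = lam_min E phi *\<^sub>R F i"
      using gij_eigenfunction[OF h \<open>h \<noteq> 0\<close>, of 1 2] gij_eigenfunction[OF f \<open>f \<noteq> 0\<close>, of 1 i] i
        \<open>2 \<le> k\<close> by (auto simp: F_def is_eigenfunction_def)
    show "\<exists>v. F i $ v \<noteq> 0 \<and> (\<forall>j\<in>{1..k}. j < i \<longrightarrow> F j $ v = 0)"
    proof (cases "i = 1")
      case True
      obtain u where "c u = 1" and "h $ u \<noteq> 0"
        using class_support[OF h \<open>h \<noteq> 0\<close>, of 1] \<open>2 \<le> k\<close> by auto
      then show ?thesis
        using True by (auto simp: F_def gij_apply)
    next
      case False
      obtain v where "c v = i" and "f $ v \<noteq> 0" and "i = 2 \<Longrightarrow> v = v0"
      proof (cases "i = 2")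
        case True
        then show ?thesis
          using that \<open>c v0 = 2\<close> \<open>f $ v0 \<noteq> 0\<close> by blast
      next
        case False
        then show ?thesis
          using that class_support[OF f \<open>f \<noteq> 0\<close> i] by blast
      qed
      then show ?thesis
        using False i \<open>h $ v0 = 0\<close> by (auto simp: F_def gij_apply)
    qed
  qed simp
  then show ?thesis
    using \<open>2 \<le> k\<close> by simp
qed

end

theorem mainTheorem2:
  fixes E :: "('n::finite) set set" and phi :: "'n \<Rightarrow> 'n set \<Rightarrow> int"
    and g :: "real^'n" and c :: "'n \<Rightarrow> nat"
  assumes hyp: "oriented_hypergraph E phi"
    and Anz: "\<exists>v w. adj E phi v w \<noteq> 0"
    and chi_eq: "real (chrom E) = (lam_max E phi - lam_min E phi) / (1 - lam_min E phi)"
    and g_eig: "is_eigenfunction E phi (lam_max E phi) g"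
    and col: "proper_strong_coloring E (chrom E) c"
  shows "(\<forall>i\<in>{1..chrom E}. \<exists>v. c v = i \<and> g $ v \<noteq> 0)
    \<and> (\<forall>i j. 1 \<le> i \<and> i < j \<and> j \<le> chrom E \<longrightarrow> Sg E phi g c i j < 0)
    \<and> (\<forall>i j. 1 \<le> i \<and> i < j \<and> j \<le> chrom E \<longrightarrow>
          RQ E phi (gij g c i j) = lam_min E phi
        \<and> lam_min E phi = (real (chrom E) - lam_max E phi) / (real (chrom E) - 1)
        \<and> is_eigenfunction E phi (lam_min E phi) (gij g c i j))
    \<and> lam_min E phi = (real (chrom E) - lam_max E phi) / (real (chrom E) - 1)
    \<and> mult E phi (lam_min E phi) \<ge> chrom E - 1
    \<and> (mult E phi (lam_max E phi) > 1 \<longrightarrow> mult E phi (lam_min E phi) > chrom E - 1)"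
proof -
  let ?k = "chrom E" and ?l = "lam_min E phi" and ?N = "lam_max E phi"
  have g: "lap E phi g = ?N *\<^sub>R g" "g \<noteq> 0"
    using g_eig unfolding is_eigenfunction_def by auto
  have "2 \<le> ?k"
    using Anz two_le_colors_if_adj_ne_0[OF col] by blast
  have "?N \<in> eigenvalues E phi"
    using g_eig unfolding eigenvalues_def by blast
  then have "?l \<le> ?N"
    by (rule rayleigh_lower_bound_le_eigenvalue[OF hyp lam_min_rayleigh[OF hyp]])
  \<comment> \<open>If lam_min >= 1, the right-hand side of chi_eq is at most 0 (x / 0 = 0 covers lam_min = 1).\<close>
  then have "?l < 1"
    using chi_eq \<open>2 \<le> ?k\<close> divide_nonneg_nonpos[of "?N - ?l" "1 - ?l"] by fastforce
  then have bound: "real ?k * (1 - ?l) = ?N - ?l"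
    using chi_eq by (simp add: field_simps)
  then have lam_min_eq: "?l = (real ?k - ?N) / (real ?k - 1)"
    using \<open>2 \<le> ?k\<close> by (simp add: field_simps)
  interpret chromatic_bound_equality E phi ?k c ?N
    using hyp col bound \<open>?l < 1\<close> by unfold_locales
  show ?thesis
    using class_support[OF g] Sg_neg[OF g] gij_eigenfunction[OF g]
      RQ_eigenfunction[OF hyp gij_eigenfunction[OF g]] lam_min_eq
      mult_lam_min_ge[OF g] mult_lam_min_gt[OF g \<open>2 \<le> ?k\<close>]
    by auto
qed

end
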